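(* Let $K$ be a subdivision of the standard $n$-simplex, i.e. an ordered, locally finite simplicial complex with $|K|=\Delta^n\subset\mathbb{A}^n$ such that every simplex of $K$ is affinely contained in a simplex of $\Delta^n$. Then there exists a smooth homotopy $\{h_t:\mathbb{A}^n\to\mathbb{A}^n\}_{t\in[0,1]}$ such that (i) $h_0=\mathrm{id}$; (ii) for every $t$, $h_t$ maps each closed simplex of $K$ into itself; (iii) each closed simplex of $K$ has an open neighborhood in $\mathbb{A}^n$ which $h_1$ maps into that same simplex.
   Context: $\mathbb{A}^n=\{x\in\mathbb{R}^{n+1}:\sum_ix_i=1\}$, an affine space of dimension $n$, and $\Delta^n\subset\mathbb{A}^n$ is the closed standard simplex (all coordinates nonnegative). A smooth homotopy means a smooth map $\mathbb{A}^n\times[0,1]\to\mathbb{A}^n$ (equivalently, after reparametrization, smooth in $t$). *)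

theory Defs
  imports "HOL-Analysis.Analysis"
begin

text \<open>The affine space A^n inside R^(n+1); the index type 'm has n+1 elements.\<close>
definition affine_space_A :: "(real^'m) set" where
  "affine_space_A = {x. (\<Sum>i\<in>UNIV. x $ i) = 1}"

definition std_simplex :: "(real^'m) set" where
  "std_simplex = {x. (\<Sum>i\<in>UNIV. x $ i) = 1 \<and> (\<forall>i. 0 \<le> x $ i)}"

text \<open>A locally finite (geometric) simplicial complex: the library notion
  simplicial_complex with finiteness replaced by local finiteness.\<close>
definition locally_finite_simplicial_complex :: "'a::euclidean_space set set \<Rightarrow> bool" where
  "locally_finite_simplicial_complex K \<longleftrightarrow>
     (\<forall>S\<in>K. \<exists>k. k simplex S) \<and>
     (\<forall>F S. S \<in> K \<and> F face_of S \<longrightarrow> F \<in> K) \<and>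
     (\<forall>S S'. S \<in> K \<and> S' \<in> K \<longrightarrow> (S \<inter> S') face_of S) \<and>
     (\<forall>x\<in>\<Union>K. \<exists>U. open U \<and> x \<in> U \<and> finite {S\<in>K. S \<inter> U \<noteq> {}})"

text \<open>C^infinity maps on a Euclidean space: f is differentiable everywhere and
  all directional derivatives x |-> Df(x) v are again C^infinity
  (coinductive/greatest-fixpoint formulation).\<close>
definition smooth_map :: "('a::euclidean_space \<Rightarrow> 'b::real_normed_vector) \<Rightarrow> bool" where
  "smooth_map f \<longleftrightarrow>
     (\<exists>S. f \<in> S \<and>
        (\<forall>g\<in>S. (\<forall>x. g differentiable (at x)) \<and>
                (\<forall>v. (\<lambda>x. frechet_derivative g (at x) v) \<in> S)))"

end

theory Submission
  imports Defs
begin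

text \<open>Every point \<open>y\<close> of \<open>|K|\<close> has a radius \<open>\<delta>(y) > 0\<close> not exceeding its distance to the
  simplices of \<open>K\<close> that do not contain \<open>y\<close> (local finiteness).  By compactness finitely many
  balls \<open>B(y\<^sub>i, \<delta>(y\<^sub>i)/4)\<close> cover \<open>|K|\<close>; let \<open>\<epsilon>\<close> be the least of these radii.  With smooth
  bumps \<open>\<beta>\<^sub>i\<close> equal to \<open>1\<close> on \<open>B(y\<^sub>i, \<delta>(y\<^sub>i)/2)\<close> and vanishing outside \<open>B(y\<^sub>i, 3\<delta>(y\<^sub>i)/4)\<close>, put
  \<open>g(x) = \<beta>\<^sub>1(x) y\<^sub>1 + (1 - \<beta>\<^sub>1(x)) (\<beta>\<^sub>2(x) y\<^sub>2 + (1 - \<beta>\<^sub>2(x)) (\<dots> x))\<close>.  If \<open>x\<close> is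
  \<open>\<epsilon>\<close>-close to a simplex \<open>S\<close>, every \<open>y\<^sub>i\<close> with \<open>\<beta>\<^sub>i(x) > 0\<close> lies in \<open>S\<close> and some
  \<open>\<beta>\<^sub>i(x) = 1\<close>, so \<open>g(x)\<close> is a convex combination of points of \<open>S\<close>.  The homotopy is
  \<open>h\<^sub>t = (1 - t) id + t g\<close>.\<close>

definition flat_exp :: "nat \<Rightarrow> real \<Rightarrow> real" where
  "flat_exp k s = (if s > 0 then exp (- inverse s) * inverse s ^ k else 0)"

lemma flat_exp_nonneg: "0 \<le> flat_exp k s"
  by (simp add: flat_exp_def)

lemma flat_exp_pos: "s > 0 \<Longrightarrow> 0 < flat_exp k s"
  by (simp add: flat_exp_def)

lemma flat_exp_eq_0: "s \<le> 0 \<Longrightarrow> flat_exp k s = 0"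
  by (simp add: flat_exp_def)

lemma tendsto_flat_exp_0: "(flat_exp k \<longlongrightarrow> 0) (at (0::real))"
proof -
  have "((\<lambda>s. (\<lambda>x. x ^ k / exp x) (inverse s)) \<longlongrightarrow> (0::real)) (at_right 0)"
    by (rule filterlim_compose[OF tendsto_power_div_exp_0 filterlim_inverse_at_top_right])
  moreover have "\<forall>\<^sub>F s in at_right 0. inverse s ^ k / exp (inverse s) = flat_exp k s"
    using eventually_at_right_less[of 0]
    by eventually_elim (simp add: flat_exp_def exp_minus field_simps)
  ultimately have right: "(flat_exp k \<longlongrightarrow> 0) (at_right 0)"
    by (rule Lim_transform_eventually)
  have "\<forall>\<^sub>F s in at_left 0. 0 = flat_exp k s"
    using eventually_at_left_real[of "-1" "0::real"] by (auto elim: eventually_mono simp: flat_exp_def)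
  then have left: "(flat_exp k \<longlongrightarrow> 0) (at_left 0)"
    by (rule Lim_transform_eventually[OF tendsto_const])
  show ?thesis
    using left right by (simp add: filterlim_at_split)
qed

lemma has_real_derivative_flat_exp:
  "(flat_exp k has_real_derivative flat_exp (k + 2) s - real k * flat_exp (k + 1) s) (at s)"
proof -
  consider "s > 0" | "s < 0" | "s = 0"
    by linarith
  then show ?thesis
  proof cases
    case 1
    have exp_part: "((\<lambda>s. exp (- inverse s)) has_real_derivative exp (- inverse s) * inverse s ^ 2) (at s)"
      using 1 by (auto intro!: derivative_eq_intros simp: power2_eq_square)
    have power_part: "\<And>s. s > 0 \<Longrightarrow>
        ((\<lambda>s. inverse s ^ k) has_real_derivative - real k * inverse s ^ (k + 1)) (at s)"
      by (rule derivative_eq_intros refl | simp add: power2_eq_square)+ (cases k, auto)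
    have "((\<lambda>s. exp (- inverse s) * inverse s ^ k) has_real_derivative
           exp (- inverse s) * inverse s ^ 2 * inverse s ^ k
             + (- real k * inverse s ^ (k + 1)) * exp (- inverse s)) (at s)"
      by (rule DERIV_mult[OF exp_part power_part[OF 1]])
    moreover have "exp (- inverse s) * inverse s ^ 2 * inverse s ^ k
        + (- real k * inverse s ^ (k + 1)) * exp (- inverse s)
      = flat_exp (k + 2) s - real k * flat_exp (k + 1) s"
      using 1 by (simp add: flat_exp_def power_add algebra_simps power2_eq_square)
    ultimately have "((\<lambda>s. exp (- inverse s) * inverse s ^ k) has_real_derivative
        flat_exp (k + 2) s - real k * flat_exp (k + 1) s) (at s)"
      by simp
    then show ?thesis
      by (rule has_field_derivative_transform_within_open[where S = "{0<..}"])
        (use 1 in \<open>auto simp: flat_exp_def\<close>)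
  next
    case 2
    then have "((\<lambda>_. 0) has_real_derivative flat_exp (k + 2) s - real k * flat_exp (k + 1) s) (at s)"
      by (simp add: flat_exp_eq_0)
    then show ?thesis
      by (rule has_field_derivative_transform_within_open[where S = "{..<0}"])
        (use 2 in \<open>auto simp: flat_exp_def\<close>)
  next
    case 3
    have "(flat_exp k y - flat_exp k 0) / (y - 0) = flat_exp (k + 1) y" for y
      by (auto simp: flat_exp_def field_simps)
    then have "((\<lambda>y. (flat_exp k y - flat_exp k 0) / (y - 0)) \<longlongrightarrow> 0) (at 0)"
      using tendsto_flat_exp_0[of "k + 1"] by simp
    then show ?thesis
      using 3 by (simp add: has_field_derivative_iff flat_exp_eq_0)
  qed
qed

text \<open>Every member is \<open>C\<^sup>\<infinity>\<close>: the class is closed under directional derivatives, so it can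
  serve as the witness set in the coinductive definition of smooth maps.  The whole family
  \<open>flat_exp k\<close> is included because it is what closes \<open>exp (-1/s)\<close> under differentiation.\<close>

inductive_set smooth_fun :: "('a::euclidean_space \<Rightarrow> real) set" where
  smooth_fun_const: "(\<lambda>x. c) \<in> smooth_fun"
| smooth_fun_linear: "linear l \<Longrightarrow> l \<in> smooth_fun"
| smooth_fun_add: "f \<in> smooth_fun \<Longrightarrow> g \<in> smooth_fun \<Longrightarrow> (\<lambda>x. f x + g x) \<in> smooth_fun"
| smooth_fun_mult: "f \<in> smooth_fun \<Longrightarrow> g \<in> smooth_fun \<Longrightarrow> (\<lambda>x. f x * g x) \<in> smooth_fun"
| smooth_fun_flat_exp: "f \<in> smooth_fun \<Longrightarrow> (\<lambda>x. flat_exp k (f x)) \<in> smooth_fun"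
| smooth_fun_inverse: "f \<in> smooth_fun \<Longrightarrow> (\<forall>x. f x \<noteq> 0) \<Longrightarrow> (\<lambda>x. inverse (f x)) \<in> smooth_fun"

lemma smooth_fun_cmult: "f \<in> smooth_fun \<Longrightarrow> (\<lambda>x. c * f x) \<in> smooth_fun"
  using smooth_fun_mult[OF smooth_fun_const] .

lemma smooth_fun_diff: "f \<in> smooth_fun \<Longrightarrow> g \<in> smooth_fun \<Longrightarrow> (\<lambda>x. f x - g x) \<in> smooth_fun"
  using smooth_fun_add[OF _ smooth_fun_cmult[of g "-1"]] by simp

lemma smooth_fun_sum:
  "finite A \<Longrightarrow> (\<And>i. i \<in> A \<Longrightarrow> f i \<in> smooth_fun) \<Longrightarrow> (\<lambda>x. \<Sum>i\<in>A. f i x) \<in> smooth_fun"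
  by (induction A rule: finite_induct) (auto intro: smooth_fun.intros)

lemma smooth_fun_compose_linear:
  assumes "f \<in> smooth_fun" and "linear L"
  shows "(\<lambda>x. f (L x)) \<in> smooth_fun"
  using assms(1)
proof induction
  case (smooth_fun_linear l)
  then show ?case
    using linear_compose[OF assms(2)] by (auto intro: smooth_fun.smooth_fun_linear simp: o_def)
qed (auto intro: smooth_fun.intros)

lemma smooth_fun_has_derivative:
  assumes "f \<in> smooth_fun"
  shows "\<exists>D. (\<forall>x. (f has_derivative D x) (at x)) \<and> (\<forall>v. (\<lambda>x. D x v) \<in> smooth_fun)"
  using assms
proof induction
  case (smooth_fun_const c)
  show ?case
    by (rule exI[of _ "\<lambda>x v. 0"]) (auto intro: smooth_fun.smooth_fun_const)
next
  case (smooth_fun_linear l)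
  then show ?case
    by (intro exI[of _ "\<lambda>x. l"])
      (auto intro: smooth_fun.intros linear_imp_has_derivative)
next
  case (smooth_fun_add f g)
  then obtain Df Dg
    where "\<forall>x. (f has_derivative Df x) (at x)" "\<forall>v. (\<lambda>x. Df x v) \<in> smooth_fun"
      and "\<forall>x. (g has_derivative Dg x) (at x)" "\<forall>v. (\<lambda>x. Dg x v) \<in> smooth_fun"
    by blast
  then show ?case
    by (intro exI[of _ "\<lambda>x v. Df x v + Dg x v"])
      (auto intro: has_derivative_add smooth_fun.smooth_fun_add)
next
  case (smooth_fun_mult f g)
  then obtain Df Dg
    where "\<forall>x. (f has_derivative Df x) (at x)" "\<forall>v. (\<lambda>x. Df x v) \<in> smooth_fun"
      and "\<forall>x. (g has_derivative Dg x) (at x)" "\<forall>v. (\<lambda>x. Dg x v) \<in> smooth_fun"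
    by blast
  with smooth_fun_mult.hyps show ?case
    by (intro exI[of _ "\<lambda>x v. f x * Dg x v + Df x v * g x"])
      (auto intro!: has_derivative_mult smooth_fun.smooth_fun_add smooth_fun.smooth_fun_mult)
next
  case (smooth_fun_flat_exp f k)
  then obtain Df
    where Df: "\<forall>x. (f has_derivative Df x) (at x)" "\<forall>v. (\<lambda>x. Df x v) \<in> smooth_fun"
    by blast
  define D where "D x v = (flat_exp (k + 2) (f x) - real k * flat_exp (k + 1) (f x)) * Df x v"
    for x v
  have "((\<lambda>x. flat_exp k (f x)) has_derivative D x) (at x)" for x
    unfolding D_def
    using has_derivative_compose[OF Df(1)[rule_format, of x]
        has_real_derivative_flat_exp[of k "f x", unfolded has_field_derivative_def]]
    by simp
  moreover have "(\<lambda>x. D x v) \<in> smooth_fun" for v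
    unfolding D_def
    by (intro smooth_fun.smooth_fun_mult smooth_fun_diff smooth_fun_cmult
        smooth_fun.smooth_fun_flat_exp smooth_fun_flat_exp.hyps Df(2)[rule_format])
  ultimately show ?case
    by blast
next
  case (smooth_fun_inverse f)
  then obtain Df
    where Df: "\<forall>x. (f has_derivative Df x) (at x)" "\<forall>v. (\<lambda>x. Df x v) \<in> smooth_fun"
    by blast
  define D where "D x v = - (inverse (f x) * Df x v * inverse (f x))" for x v
  have "((\<lambda>x. inverse (f x)) has_derivative D x) (at x)" for x
    unfolding D_def using Deriv.has_derivative_inverse[OF _ Df(1)[rule_format]] smooth_fun_inverse.hyps(2)
    by blast
  moreover have "(\<lambda>x. D x v) \<in> smooth_fun" for v
    using smooth_fun_cmult[of _ "-1", OF smooth_fun.smooth_fun_mult[OF smooth_fun.smooth_fun_mult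
          [OF smooth_fun.smooth_fun_inverse[OF smooth_fun_inverse.hyps] Df(2)[rule_format]]
          smooth_fun.smooth_fun_inverse[OF smooth_fun_inverse.hyps]]]
    by (simp add: D_def)
  ultimately show ?case
    by blast
qed

definition smooth_vec :: "('a::euclidean_space \<Rightarrow> 'b::euclidean_space) set" where
  "smooth_vec = {F. \<forall>b\<in>Basis. (\<lambda>x. F x \<bullet> b) \<in> smooth_fun}"

lemma smooth_vec_compose_linear:
  "F \<in> smooth_vec \<Longrightarrow> linear L \<Longrightarrow> (\<lambda>x. F (L x)) \<in> smooth_vec"
  by (simp add: smooth_vec_def smooth_fun_compose_linear[where f = "\<lambda>x. F x \<bullet> _"])

lemma smooth_vec_has_derivative:
  assumes "F \<in> smooth_vec"
  shows "\<exists>D. (\<forall>x. (F has_derivative D x) (at x)) \<and> (\<forall>v. (\<lambda>x. D x v) \<in> smooth_vec)"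
proof -
  have "\<forall>b\<in>Basis. \<exists>D. (\<forall>x. ((\<lambda>x. F x \<bullet> b) has_derivative D x) (at x))
                    \<and> (\<forall>v. (\<lambda>x. D x v) \<in> smooth_fun)"
    using assms smooth_fun_has_derivative unfolding smooth_vec_def by blast
  then obtain D where D: "\<And>b. b \<in> Basis \<Longrightarrow> \<forall>x. ((\<lambda>x. F x \<bullet> b) has_derivative D b x) (at x)"
    "\<And>b. b \<in> Basis \<Longrightarrow> \<forall>v. (\<lambda>x. D b x v) \<in> smooth_fun"
    by metis
  define DF where "DF x v = (\<Sum>b\<in>Basis. D b x v *\<^sub>R b)" for x v
  have component: "DF x v \<bullet> b = D b x v" if "b \<in> Basis" for x v b
    unfolding DF_def using that
    by (simp add: inner_sum_left inner_Basis if_distrib[of "\<lambda>y. D _ x v * y"] sum.delta'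
        cong: if_cong)
  have "(F has_derivative DF x) (at x)" for x
    by (rule has_derivative_componentwise_within[THEN iffD2]) (simp add: component D(1))
  moreover have "(\<lambda>x. DF x v) \<in> smooth_vec" for v
    by (simp add: smooth_vec_def component D(2))
  ultimately show ?thesis
    by blast
qed

lemma smooth_vec_imp_smooth_map: "F \<in> smooth_vec \<Longrightarrow> smooth_map F"
  unfolding smooth_map_def
proof (intro exI[of _ smooth_vec] conjI ballI allI)
  fix g :: "'a \<Rightarrow> 'b" and x v
  assume "g \<in> smooth_vec"
  then obtain D where D: "\<And>x. (g has_derivative D x) (at x)" "\<And>v. (\<lambda>x. D x v) \<in> smooth_vec"
    using smooth_vec_has_derivative by blast
  show "g differentiable at x"
    using D(1) by (rule differentiableI)
  show "(\<lambda>x. frechet_derivative g (at x) v) \<in> smooth_vec"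
    using D by (simp add: frechet_derivative_at[OF D(1), symmetric])
qed

definition smooth_step :: "real \<Rightarrow> real" where
  "smooth_step s = flat_exp 0 s / (flat_exp 0 s + flat_exp 0 (1 - s))"

lemma smooth_step_denom_pos: "flat_exp 0 s + flat_exp 0 (1 - s) > 0"
  using flat_exp_pos[of s 0] flat_exp_pos[of "1 - s" 0] flat_exp_nonneg[of 0 s]
    flat_exp_nonneg[of 0 "1 - s"]
  by (cases "s > 0") linarith+

lemma smooth_step_eq_0: "s \<le> 0 \<Longrightarrow> smooth_step s = 0"
  by (simp add: smooth_step_def flat_exp_eq_0)

lemma smooth_step_eq_1: "s \<ge> 1 \<Longrightarrow> smooth_step s = 1"
  using smooth_step_denom_pos[of s] by (simp add: smooth_step_def flat_exp_eq_0)

lemma smooth_step_nonneg: "0 \<le> smooth_step s"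
  by (simp add: smooth_step_def flat_exp_nonneg)

lemma smooth_step_le_1: "smooth_step s \<le> 1"
  using smooth_step_denom_pos[of s] flat_exp_nonneg[of 0 "1 - s"]
  by (simp add: smooth_step_def field_simps)

lemma smooth_fun_smooth_step: "f \<in> smooth_fun \<Longrightarrow> (\<lambda>x. smooth_step (f x)) \<in> smooth_fun"
  unfolding smooth_step_def divide_inverse
  using smooth_step_denom_pos
  by (intro smooth_fun_mult smooth_fun_flat_exp smooth_fun_inverse smooth_fun_add
      smooth_fun_diff smooth_fun_const allI) (auto simp: less_imp_neq[symmetric])

definition bump :: "real \<Rightarrow> real \<Rightarrow> 'a::real_normed_vector \<Rightarrow> 'a \<Rightarrow> real" where
  "bump r1 r2 y x = smooth_step ((r2\<^sup>2 - (norm (x - y))\<^sup>2) / (r2\<^sup>2 - r1\<^sup>2))"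

lemma bump_nonneg: "0 \<le> bump r1 r2 y x"
  by (simp add: bump_def smooth_step_nonneg)

lemma bump_le_1: "bump r1 r2 y x \<le> 1"
  by (simp add: bump_def smooth_step_le_1)

lemma bump_eq_1:
  assumes "0 \<le> r1" "r1 < r2" "norm (x - y) \<le> r1"
  shows "bump r1 r2 y x = 1"
proof -
  have "(norm (x - y))\<^sup>2 \<le> r1\<^sup>2" "r1\<^sup>2 < r2\<^sup>2"
    using assms by (simp_all add: power_mono power_strict_mono)
  then show ?thesis
    by (simp add: bump_def smooth_step_eq_1)
qed

lemma bump_pos_imp_norm_less:
  assumes "0 \<le> r1" "r1 < r2" "bump r1 r2 y x > 0"
  shows "norm (x - y) < r2"
proof (rule ccontr)
  assume "\<not> norm (x - y) < r2"
  then have "r2\<^sup>2 \<le> (norm (x - y))\<^sup>2" "r1\<^sup>2 < r2\<^sup>2"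
    using assms by (simp_all add: power_mono power_strict_mono)
  then have "(r2\<^sup>2 - (norm (x - y))\<^sup>2) / (r2\<^sup>2 - r1\<^sup>2) \<le> 0"
    by (intro divide_nonpos_pos) auto
  then show False
    using assms(3) by (simp add: bump_def smooth_step_eq_0)
qed

lemma smooth_fun_bump: "(bump r1 r2 (y::'a::euclidean_space)) \<in> smooth_fun"
proof -
  have "(norm z)\<^sup>2 = (\<Sum>b\<in>Basis. (z \<bullet> b) * (z \<bullet> b))" for z :: 'a
    by (simp add: power2_norm_eq_inner euclidean_inner[of z z])
  then have "bump r1 r2 y = (\<lambda>x. smooth_step (inverse (r2\<^sup>2 - r1\<^sup>2) *
      (r2\<^sup>2 - (\<Sum>b\<in>Basis. (x \<bullet> b - y \<bullet> b) * (x \<bullet> b - y \<bullet> b)))))"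
    by (simp add: bump_def fun_eq_iff inner_diff_left divide_inverse mult.commute)
  also have "\<dots> \<in> smooth_fun"
    by (intro smooth_fun_smooth_step smooth_fun_cmult smooth_fun_diff smooth_fun_sum
        smooth_fun.intros finite_Basis) (auto simp: linear_iff inner_add_left)
  finally show ?thesis .
qed

fun blend :: "('a \<Rightarrow> 'a \<Rightarrow> real) \<Rightarrow> 'a list \<Rightarrow> 'a \<Rightarrow> 'a::real_vector" where
  "blend B [] x = x"
| "blend B (y # ys) x = B y x *\<^sub>R y + (1 - B y x) *\<^sub>R blend B ys x"

lemma blend_in_convex:
  assumes "convex C"
    and "\<And>y. y \<in> set ys \<Longrightarrow> 0 \<le> B y x \<and> B y x \<le> 1"
    and "\<And>y. y \<in> set ys \<Longrightarrow> 0 < B y x \<Longrightarrow> y \<in> C"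
    and "x \<in> C \<or> (\<exists>y\<in>set ys. B y x = 1)"
  shows "blend B ys x \<in> C"
  using assms(2-4)
proof (induction ys)
  case (Cons y ys)
  consider "B y x = 0" | "B y x = 1" | "0 < B y x" "B y x < 1"
    using Cons.prems(1)[of y] by fastforce
  then show ?case
  proof cases
    case 3
    then have "y \<in> C" "blend B ys x \<in> C"
      using Cons by auto
    then show ?thesis
      using convexD[OF assms(1)] 3 by simp
  qed (use Cons in auto)
qed simp

lemma smooth_vec_blend:
  "(\<And>y. y \<in> set ys \<Longrightarrow> B y \<in> smooth_fun) \<Longrightarrow> blend B ys \<in> smooth_vec"
proof (induction ys)
  case Nil
  show ?case
    by (simp add: smooth_vec_def smooth_fun_linear linear_iff inner_add_left)
next
  case (Cons y ys)
  then have "B y \<in> smooth_fun" "\<forall>b\<in>Basis. (\<lambda>x. blend B ys x \<bullet> b) \<in> smooth_fun"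
    by (auto simp: smooth_vec_def)
  then show ?case
    by (simp add: smooth_vec_def inner_add_left)
      (intro ballI smooth_fun_add smooth_fun_mult smooth_fun_diff smooth_fun_const; simp)
qed

lemma locally_finite_closed_separation:
  assumes "\<And>S. S \<in> K \<Longrightarrow> closed S"
    and "open U" "y \<in> U" "finite {S\<in>K. S \<inter> U \<noteq> {}}"
  shows "\<exists>d>0. \<forall>S\<in>K. y \<notin> S \<longrightarrow> (\<forall>z\<in>S. d \<le> dist y z)"
proof -
  obtain e where e: "e > 0" "ball y e \<subseteq> U"
    using assms(2,3) open_contains_ball by blast
  define F where "F = {S\<in>K. S \<inter> U \<noteq> {} \<and> y \<notin> S}"
  have "finite F"
    using assms(4) by (rule finite_subset[rotated]) (auto simp: F_def)
  then have "closed (\<Union>F)"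
    using assms(1) by (intro closed_Union) (auto simp: F_def)
  moreover have "y \<notin> \<Union>F"
    by (auto simp: F_def)
  ultimately obtain e' where e': "e' > 0" "ball y e' \<inter> \<Union>F = {}"
    by (metis open_Compl open_contains_ball Compl_iff disjoint_eq_subset_Compl)
  have "min e e' \<le> dist y z" if "S \<in> K" "y \<notin> S" "z \<in> S" for S z
  proof (cases "S \<inter> U = {}")
    case True
    then have "z \<notin> ball y e"
      using e(2) that(3) by blast
    then show ?thesis
      by (simp add: min.coboundedI1)
  next
    case False
    then have "S \<in> F"
      using that by (simp add: F_def)
    then have "z \<notin> ball y e'"
      using e'(2) that(3) by blast
    then show ?thesis
      by (simp add: min.coboundedI2)
  qed
  then show ?thesis
    using e e' by (intro exI[of _ "min e e'"]) auto
qed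

lemma separated_finite_cover:
  fixes K :: "'a::metric_space set set"
  assumes "\<And>S. S \<in> K \<Longrightarrow> closed S"
    and "\<And>x. x \<in> \<Union>K \<Longrightarrow> \<exists>U. open U \<and> x \<in> U \<and> finite {S\<in>K. S \<inter> U \<noteq> {}}"
    and "compact (\<Union>K)"
  obtains ys \<epsilon> \<delta> where "set ys \<subseteq> \<Union>K" "\<epsilon> > 0" "\<And>y. y \<in> set ys \<Longrightarrow> 4 * \<epsilon> \<le> \<delta> y"
    and "\<And>y S z. y \<in> set ys \<Longrightarrow> S \<in> K \<Longrightarrow> y \<notin> S \<Longrightarrow> z \<in> S \<Longrightarrow> \<delta> y \<le> dist y z"
    and "\<Union>K \<subseteq> (\<Union>y\<in>set ys. ball y (\<delta> y / 4))"
proof -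
  have "\<exists>d>0. \<forall>S\<in>K. y \<notin> S \<longrightarrow> (\<forall>z\<in>S. d \<le> dist y z)" if "y \<in> \<Union>K" for y
    using assms(2)[OF that] locally_finite_closed_separation[OF assms(1)] by blast
  then obtain \<delta> where \<delta>: "\<And>y. y \<in> \<Union>K \<Longrightarrow> \<delta> y > 0"
    "\<And>y S z. y \<in> \<Union>K \<Longrightarrow> S \<in> K \<Longrightarrow> y \<notin> S \<Longrightarrow> z \<in> S \<Longrightarrow> \<delta> y \<le> dist y z"
    by metis
  have "y \<in> ball y (\<delta> y / 4)" if "y \<in> \<Union>K" for y
    using \<delta>(1)[OF that] by simp
  then have "\<Union>K \<subseteq> (\<Union>y\<in>\<Union>K. ball y (\<delta> y / 4))"
    by blast
  then obtain Y where Y: "Y \<subseteq> \<Union>K" "finite Y" "\<Union>K \<subseteq> (\<Union>y\<in>Y. ball y (\<delta> y / 4))"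
    by (rule compactE_image[OF assms(3) open_ball])
  obtain ys where ys: "set ys = Y"
    using finite_list[OF Y(2)] by blast
  define \<epsilon> where "\<epsilon> = Min (insert 1 ((\<lambda>y. \<delta> y / 4) ` Y))"
  show thesis
  proof
    show "set ys \<subseteq> \<Union>K" "\<Union>K \<subseteq> (\<Union>y\<in>set ys. ball y (\<delta> y / 4))"
      using Y ys by simp_all
    show "\<epsilon> > 0"
      unfolding \<epsilon>_def using Y \<delta>(1) by (auto simp: Min_gr_iff)
    show "4 * \<epsilon> \<le> \<delta> y" if "y \<in> set ys" for y
    proof -
      have "\<epsilon> \<le> \<delta> y / 4"
        unfolding \<epsilon>_def using Y(2) that ys by (intro Min_le) auto
      then show ?thesis
        by simp
    qed
    show "\<delta> y \<le> dist y z" if "y \<in> set ys" "S \<in> K" "y \<notin> S" "z \<in> S" for y S z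
      using \<delta>(2) that Y(1) ys by blast
  qed
qed

lemma smooth_retraction_onto_cells:
  fixes K :: "'a::euclidean_space set set"
  assumes "\<And>S. S \<in> K \<Longrightarrow> closed S" "\<And>S. S \<in> K \<Longrightarrow> convex S"
    and "\<And>x. x \<in> \<Union>K \<Longrightarrow> \<exists>U. open U \<and> x \<in> U \<and> finite {S\<in>K. S \<inter> U \<noteq> {}}"
    and "compact (\<Union>K)"
    and "convex C" "\<Union>K \<subseteq> C"
  obtains g \<epsilon> where "g \<in> smooth_vec" "\<epsilon> > 0" "\<And>x. x \<in> C \<Longrightarrow> g x \<in> C"
    and "\<And>S x z. S \<in> K \<Longrightarrow> z \<in> S \<Longrightarrow> dist x z < \<epsilon> \<Longrightarrow> g x \<in> S"
proof -
  obtain ys \<epsilon> \<delta> where ys: "set ys \<subseteq> \<Union>K" and \<epsilon>: "\<epsilon> > 0" "\<And>y. y \<in> set ys \<Longrightarrow> 4 * \<epsilon> \<le> \<delta> y"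
    and \<delta>: "\<And>y S z. y \<in> set ys \<Longrightarrow> S \<in> K \<Longrightarrow> y \<notin> S \<Longrightarrow> z \<in> S \<Longrightarrow> \<delta> y \<le> dist y z"
    and cover: "\<Union>K \<subseteq> (\<Union>y\<in>set ys. ball y (\<delta> y / 4))"
    using separated_finite_cover[OF assms(1,3,4)] by blast
  define B where "B y = bump (\<delta> y / 2) (3 * \<delta> y / 4) y" for y
  have \<delta>_pos: "0 < \<delta> y" if "y \<in> set ys" for y
    using \<epsilon>(1) \<epsilon>(2)[OF that] by linarith
  have B_range: "0 \<le> B y x \<and> B y x \<le> 1" for y x
    by (simp add: B_def bump_nonneg bump_le_1)
  have into_cell: "blend B ys x \<in> S" if S: "S \<in> K" "z \<in> S" and xz: "dist x z < \<epsilon>" for S x z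
  proof (rule blend_in_convex[OF assms(2)[OF S(1)] B_range])
    fix y assume y: "y \<in> set ys" "0 < B y x"
    then have "norm (x - y) < 3 * \<delta> y / 4"
      using bump_pos_imp_norm_less[of "\<delta> y / 2" "3 * \<delta> y / 4" y x] \<delta>_pos[OF y(1)]
      by (simp add: B_def)
    then have "dist y x < 3 * \<delta> y / 4"
      by (simp add: dist_norm norm_minus_commute)
    then have "dist y z < \<delta> y"
      using dist_triangle[of y z x] xz \<epsilon>(2)[OF y(1)] by linarith
    then show "y \<in> S"
      using \<delta>[OF y(1) S(1) _ S(2)] by (meson not_le)
  next
    obtain y where y: "y \<in> set ys" "z \<in> ball y (\<delta> y / 4)"
      using cover S by blast
    have "dist x y \<le> dist x z + dist y z"
      by (rule dist_triangle2)
    then have "dist x y \<le> \<delta> y / 2"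
      using xz y(2) \<epsilon>(2)[OF y(1)] by simp
    then have "norm (x - y) \<le> \<delta> y / 2"
      by (simp add: dist_norm)
    then have "B y x = 1"
      unfolding B_def by (rule bump_eq_1[rotated 2]) (use \<delta>_pos[OF y(1)] in auto)
    then show "x \<in> S \<or> (\<exists>y\<in>set ys. B y x = 1)"
      using y by blast
  qed
  show thesis
  proof
    show "blend B ys \<in> smooth_vec"
      by (simp add: smooth_vec_blend B_def smooth_fun_bump)
    show "blend B ys x \<in> C" if "x \<in> C" for x
      by (rule blend_in_convex[OF assms(5) B_range]) (use ys assms(6) that in auto)
  qed (fact \<epsilon>(1) into_cell)+
qed

lemma smooth_vec_straight_line_homotopy:
  fixes g :: "'a::euclidean_space \<Rightarrow> 'a"
  assumes "g \<in> smooth_vec"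
  shows "(\<lambda>p. (1 - snd p) *\<^sub>R fst p + snd p *\<^sub>R g (fst p)) \<in> smooth_vec"
proof -
  have t: "(\<lambda>p :: 'a \<times> real. snd p) \<in> smooth_fun"
    by (rule smooth_fun_linear) (auto simp: linear_iff)
  have x: "(\<lambda>p :: 'a \<times> real. fst p \<bullet> b) \<in> smooth_fun" for b
    by (rule smooth_fun_linear) (auto simp: linear_iff inner_add_left)
  have gx: "(\<lambda>p :: 'a \<times> real. g (fst p) \<bullet> b) \<in> smooth_fun" if "b \<in> Basis" for b
    using smooth_vec_compose_linear[OF assms linear_fst] that by (auto simp: smooth_vec_def)
  show ?thesis
    unfolding smooth_vec_def
    by (simp add: inner_add_left)
      (intro ballI smooth_fun_add smooth_fun_mult smooth_fun_diff smooth_fun_const t x gx)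
qed

lemma compact_std_simplex: "compact (std_simplex :: (real^'m) set)"
  unfolding compact_eq_bounded_closed
proof
  have "x $ i \<le> 1" if "x \<in> std_simplex" for x :: "real^'m" and i
    using that member_le_sum[of i UNIV "\<lambda>j. x $ j"] by (simp add: std_simplex_def)
  then have "std_simplex \<subseteq> cbox (0::real^'m) 1"
    by (auto simp: mem_box_cart std_simplex_def)
  then show "bounded (std_simplex :: (real^'m) set)"
    using bounded_cbox bounded_subset by blast
  show "closed (std_simplex :: (real^'m) set)"
    unfolding std_simplex_def
    by (intro closed_Collect_conj closed_Collect_all closed_Collect_eq closed_Collect_le
        continuous_intros)
qed

lemma convex_affine_space_A: "convex (affine_space_A :: (real^'m) set)"
  unfolding convex_def affine_space_A_def
  by (simp add: sum.distrib sum_distrib_left[symmetric])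

theorem mainTheorem13:
  fixes K :: "(real^'m) set set"
  assumes "locally_finite_simplicial_complex K"
    and "\<Union>K = std_simplex"
  shows "\<exists>h :: real \<Rightarrow> real^'m \<Rightarrow> real^'m.
           smooth_map (\<lambda>p :: (real^'m) \<times> real. h (snd p) (fst p)) \<and>
           (\<forall>t\<in>{0..1}. h t ` affine_space_A \<subseteq> affine_space_A) \<and>
           (\<forall>x\<in>affine_space_A. h 0 x = x) \<and>
           (\<forall>t\<in>{0..1}. \<forall>S\<in>K. h t ` S \<subseteq> S) \<and>
           (\<forall>S\<in>K. \<exists>U. open U \<and> S \<subseteq> U \<and> h 1 ` (U \<inter> affine_space_A) \<subseteq> S)"
proof -
  have cells: "\<And>S. S \<in> K \<Longrightarrow> closed S" "\<And>S. S \<in> K \<Longrightarrow> convex S"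
    and locfin: "\<And>x. x \<in> \<Union>K \<Longrightarrow> \<exists>U. open U \<and> x \<in> U \<and> finite {S\<in>K. S \<inter> U \<noteq> {}}"
    using assms(1) closed_simplex convex_simplex
    unfolding locally_finite_simplicial_complex_def by blast+
  have compact: "compact (\<Union>K)" and in_A: "\<Union>K \<subseteq> affine_space_A"
    using assms(2) compact_std_simplex by (auto simp: std_simplex_def affine_space_A_def)
  show ?thesis
  proof (rule smooth_retraction_onto_cells[OF cells locfin compact convex_affine_space_A in_A])
    fix g :: "real^'m \<Rightarrow> real^'m" and \<epsilon> :: real
    assume g: "g \<in> smooth_vec" and g_A: "\<And>x. x \<in> affine_space_A \<Longrightarrow> g x \<in> affine_space_A"
      and \<epsilon>: "\<epsilon> > 0"
      and g_near: "\<And>S x z. S \<in> K \<Longrightarrow> z \<in> S \<Longrightarrow> dist x z < \<epsilon> \<Longrightarrow> g x \<in> S"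
    define h where "h t x = (1 - t) *\<^sub>R x + t *\<^sub>R g x" for t :: real and x :: "real^'m"
    have h_in: "h t x \<in> C" if "convex C" "t \<in> {0..1}" "x \<in> C" "g x \<in> C" for C t x
      using convexD[OF that(1,3,4), of "1 - t" t] that(2) by (simp add: h_def)
    show ?thesis
    proof (intro exI[of _ h] conjI ballI)
      show "smooth_map (\<lambda>p :: (real^'m) \<times> real. h (snd p) (fst p))"
        unfolding h_def by (intro smooth_vec_imp_smooth_map smooth_vec_straight_line_homotopy g)
      show "h t ` affine_space_A \<subseteq> affine_space_A" if "t \<in> {0..1}" for t
        using h_in[OF convex_affine_space_A that] g_A by blast
      show "h 0 x = x" for x
        by (simp add: h_def)
      show "h t ` S \<subseteq> S" if "t \<in> {0..1}" "S \<in> K" for t S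
      proof -
        have "g x \<in> S" if "x \<in> S" for x
          using g_near[OF \<open>S \<in> K\<close> that] \<epsilon> by simp
        then show ?thesis
          using h_in[OF cells(2)[OF \<open>S \<in> K\<close>] \<open>t \<in> {0..1}\<close>] by blast
      qed
      show "\<exists>U. open U \<and> S \<subseteq> U \<and> h 1 ` (U \<inter> affine_space_A) \<subseteq> S" if "S \<in> K" for S
      proof (intro exI[of _ "\<Union>z\<in>S. ball z \<epsilon>"] conjI)
        show "open (\<Union>z\<in>S. ball z \<epsilon>)" "S \<subseteq> (\<Union>z\<in>S. ball z \<epsilon>)"
          using \<epsilon> by auto
        show "h 1 ` ((\<Union>z\<in>S. ball z \<epsilon>) \<inter> affine_space_A) \<subseteq> S"
          using g_near[OF that] by (auto simp: h_def dist_commute)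
      qed
    qed
  qed
qed

end
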